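(* Let $A$ be an Archimedean semiprime $f$-algebra which is bounded quasi-inversion closed. Then every intermediate algebra in $A$ (i.e., every subalgebra $B$ of $A$ with $A_b\subseteq B$) is an order ideal of $A$; that is, if $a\in A$, $b\in B$ and $|a|\le |b|$, then $a\in B$.
   Context: An $f$-algebra is a real associative algebra that is a vector lattice with $A_+A_+\subseteq A_+$ and such that $a\wedge b=0$ implies $ac\wedge b=ca\wedge b=0$ for all $c\in A_+$. It is semiprime if $0$ is its only nilpotent element. An element $a\in A$ is quasi-invertible if there is $a^\ast\in A$ with $a+a^\ast=aa^\ast$; $Q(A)$ denotes the set of quasi-invertible elements. $A$ is called bounded quasi-inversion closed if for every $a\in A$, $|a|\le|a^2-a|$ implies $a\in Q(A)$. For $a\in A$, $A(a)=\{x\in A: |x|\le \mu|a| \text{ for some }\mu\in(0,\infty)\}$ is the principal order ideal generated by $a$. An element $a$ is bounded if $a^2\in A(a)$, i.e. $a^2\le\mu|a|$ for some $\mu\in(0,\infty)$; $A_b$ is the set of bounded elements. An intermediate algebra in $A$ is a subalgebra of $A$ containing $A_b$. An order ideal is a solid vector subspace. *)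

theory Defs
  imports Complex_Main "HOL-Library.Lattice_Algebras"
begin

definition f_algebra :: "'a::{real_algebra, lattice_ab_group_add_abs, ordered_real_vector} itself \<Rightarrow> bool" where
  "f_algebra _ \<longleftrightarrow>
     (\<forall>a b::'a. 0 \<le> a \<longrightarrow> 0 \<le> b \<longrightarrow> 0 \<le> a * b) \<and>
     (\<forall>a b c::'a. inf a b = 0 \<longrightarrow> 0 \<le> c \<longrightarrow> inf (a * c) b = 0 \<and> inf (c * a) b = 0)"

definition archimedean_vl :: "'a::{real_algebra, lattice_ab_group_add_abs, ordered_real_vector} itself \<Rightarrow> bool" where
  "archimedean_vl _ \<longleftrightarrow> (\<forall>x y::'a. (\<forall>n::nat. real n *\<^sub>R \<bar>x\<bar> \<le> \<bar>y\<bar>) \<longrightarrow> x = 0)"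

text \<open>Positive powers in a possibly non-unital algebra: \<open>npow n a = a^(n+1)\<close>.\<close>
fun npow :: "nat \<Rightarrow> 'a::semigroup_mult \<Rightarrow> 'a" where
  "npow 0 a = a"
| "npow (Suc n) a = a * npow n a"

definition nilpotent :: "'a::{semigroup_mult, zero} \<Rightarrow> bool" where
  "nilpotent a \<longleftrightarrow> (\<exists>n. npow n a = 0)"

definition semiprime :: "'a::{semigroup_mult, zero} itself \<Rightarrow> bool" where
  "semiprime _ \<longleftrightarrow> (\<forall>a::'a. nilpotent a \<longrightarrow> a = 0)"

definition quasi_invertible :: "'a::ring \<Rightarrow> bool" where
  "quasi_invertible a \<longleftrightarrow> (\<exists>a'. a + a' = a * a')"

definition bounded_qi_closed :: "'a::{real_algebra, lattice_ab_group_add_abs, ordered_real_vector} itself \<Rightarrow> bool" where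
  "bounded_qi_closed _ \<longleftrightarrow> (\<forall>a::'a. \<bar>a\<bar> \<le> \<bar>a * a - a\<bar> \<longrightarrow> quasi_invertible a)"

definition principal_ideal :: "'a::{real_algebra, lattice_ab_group_add_abs, ordered_real_vector} \<Rightarrow> 'a set" where
  "principal_ideal a = {x. \<exists>\<mu>::real. 0 < \<mu> \<and> \<bar>x\<bar> \<le> \<mu> *\<^sub>R \<bar>a\<bar>}"

definition bounded_elems :: "'a::{real_algebra, lattice_ab_group_add_abs, ordered_real_vector} set" where
  "bounded_elems = {a. a * a \<in> principal_ideal a}"

definition subalgebra :: "'a::real_algebra set \<Rightarrow> bool" where
  "subalgebra B \<longleftrightarrow> 0 \<in> B \<and> (\<forall>x\<in>B. \<forall>y\<in>B. x + y \<in> B \<and> x * y \<in> B)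
      \<and> (\<forall>r::real. \<forall>x\<in>B. r *\<^sub>R x \<in> B)"

definition intermediate_algebra :: "'a::{real_algebra, lattice_ab_group_add_abs, ordered_real_vector} set \<Rightarrow> bool" where
  "intermediate_algebra B \<longleftrightarrow> subalgebra B \<and> bounded_elems \<subseteq> B"

definition order_ideal :: "'a::{real_vector, lattice_ab_group_add_abs} set \<Rightarrow> bool" where
  "order_ideal I \<longleftrightarrow> 0 \<in> I \<and> (\<forall>x\<in>I. \<forall>y\<in>I. x + y \<in> I) \<and> (\<forall>r::real. \<forall>x\<in>I. r *\<^sub>R x \<in> I)
      \<and> (\<forall>a b. b \<in> I \<longrightarrow> \<bar>a\<bar> \<le> \<bar>b\<bar> \<longrightarrow> a \<in> I)"

end

theory Submission
  imports Defs
begin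

text \<open>Let \<open>0 \<le> a \<le> \<bar>b\<bar>\<close> with \<open>b \<in> B\<close>, and put \<open>p = b\<^sup>2 \<ge> 0\<close>. Bounded quasi-inversion
  closedness applied to \<open>-p\<close> makes \<open>1 + p\<close> invertible in the unitization, and
  \<open>w = (1 + p)\<^sup>-\<^sup>1 a\<close> is positive because \<open>(1 + p) z \<ge> 0\<close> forces \<open>z \<ge> 0\<close> in an f-algebra.
  Comparing with \<open>a \<le> \<bar>b\<bar>\<close> one finds \<open>w\<^sup>2 \<le> w\<close> and \<open>(b w)\<^sup>2 \<le> \<bar>b w\<bar>\<close>, so \<open>w\<close> and \<open>b w\<close> are
  bounded and lie in \<open>B\<close>; hence so does \<open>a = w + b (b w)\<close>. A general \<open>a\<close> is handled
  through its positive and negative parts.\<close>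

lemma inf_pprt_pprt_uminus: "inf (pprt x) (pprt (- x)) = (0::'a::lattice_ab_group_add)"
  by (metis ab_left_minus add_cancel_right_left add_inf_distrib_right nprt_def pprt_neg prts)

lemma pprt_diff_of_inf_eq_0:
  fixes x y :: "'a::lattice_ab_group_add"
  assumes "inf x y = 0"
  shows "pprt (x - y) = x"
proof -
  have "pprt (x - y) = sup (x + - y) (y + - y)"
    by (simp add: pprt_def)
  also have "\<dots> = sup x y - y"
    by (simp only: add_sup_distrib_right[symmetric] diff_conv_add_uminus)
  also have "sup x y = x + y"
    using add_eq_inf_sup[of x y] assms by simp
  finally show ?thesis by simp
qed

lemma abs_diff_of_inf_eq_0:
  fixes x y :: "'a::lattice_ab_group_add_abs"
  assumes "inf x y = 0"
  shows "\<bar>x - y\<bar> = x + y"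
proof -
  have "pprt (y - x) = y"
    using assms by (simp add: pprt_diff_of_inf_eq_0 inf_commute)
  then have "nprt (x - y) = - y"
    using nprt_neg[of "y - x"] by simp
  then show ?thesis
    using abs_prts[of "x - y"] pprt_diff_of_inf_eq_0[OF assms] by simp
qed

lemma pprt_diff_pprt_uminus: "pprt x - pprt (- x) = (x::'a::lattice_ab_group_add)"
  using prts[of x] pprt_neg[of x] by simp

lemma pprt_add_pprt_uminus: "pprt x + pprt (- x) = \<bar>x::'a::lattice_ab_group_add_abs\<bar>"
  using abs_prts[of x] pprt_neg[of x] by simp

lemma subalgebra_diff:
  assumes "subalgebra B" "x \<in> B" "y \<in> B"
  shows "x - y \<in> B"
proof -
  have "x + (- 1) *\<^sub>R y \<in> B"
    using assms unfolding subalgebra_def by blast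
  then show ?thesis by simp
qed

lemma bounded_elemsI:
  assumes "\<bar>x * x\<bar> \<le> \<bar>x\<bar>"
  shows "x \<in> bounded_elems"
  unfolding bounded_elems_def principal_ideal_def
  using assms by (force intro: exI[of _ "1::real"])

context
  assumes f_alg: "f_algebra TYPE('a::{real_algebra, lattice_ab_group_add_abs, ordered_real_vector})"
begin

lemma f_algebra_mult_nonneg:
  fixes x y :: 'a
  shows "0 \<le> x \<Longrightarrow> 0 \<le> y \<Longrightarrow> 0 \<le> x * y"
  using f_alg unfolding f_algebra_def by blast

lemma f_algebra_inf_mult_right_eq_0:
  fixes x y z :: 'a
  shows "inf x y = 0 \<Longrightarrow> 0 \<le> z \<Longrightarrow> inf (x * z) y = 0"
  using f_alg unfolding f_algebra_def by blast

lemma f_algebra_inf_mult_left_eq_0: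
  fixes x y z :: 'a
  shows "inf x y = 0 \<Longrightarrow> 0 \<le> z \<Longrightarrow> inf (z * x) y = 0"
  using f_alg unfolding f_algebra_def by blast

lemma f_algebra_mult_right_mono:
  fixes x y z :: 'a
  assumes "x \<le> y" "0 \<le> z"
  shows "x * z \<le> y * z"
  using f_algebra_mult_nonneg[of "y - x" z] assms by (simp add: algebra_simps)

lemma f_algebra_mult_left_mono:
  fixes x y z :: 'a
  assumes "x \<le> y" "0 \<le> z"
  shows "z * x \<le> z * y"
  using f_algebra_mult_nonneg[of z "y - x"] assms by (simp add: algebra_simps)

lemma f_algebra_mult_eq_0_of_inf_eq_0:
  fixes x y :: 'a
  assumes "inf x y = 0"
  shows "x * y = 0"
proof -
  have "0 \<le> x" "0 \<le> y"
    using assms by (metis inf.cobounded1, metis inf.cobounded2)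
  have "inf y (x * y) = 0"
    using f_algebra_inf_mult_right_eq_0[OF assms \<open>0 \<le> y\<close>] by (simp add: inf_commute)
  then have "inf (x * y) (x * y) = 0"
    using f_algebra_inf_mult_left_eq_0[OF _ \<open>0 \<le> x\<close>] by blast
  then show ?thesis by simp
qed

lemma f_algebra_pprt_mult_left:
  fixes t x :: 'a
  assumes "0 \<le> t"
  shows "pprt (t * x) = t * pprt x"
proof -
  have "inf (pprt (- x)) (t * pprt x) = 0"
    using f_algebra_inf_mult_left_eq_0[OF inf_pprt_pprt_uminus assms]
    by (simp add: inf_commute)
  then have "inf (t * pprt x) (t * pprt (- x)) = 0"
    using f_algebra_inf_mult_left_eq_0[OF _ assms] by (simp add: inf_commute)
  moreover have "t * x = t * pprt x - t * pprt (- x)"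
    by (metis pprt_diff_pprt_uminus right_diff_distrib)
  ultimately show ?thesis by (simp add: pprt_diff_of_inf_eq_0)
qed

lemma f_algebra_abs_mult_right:
  fixes x w :: 'a
  assumes "0 \<le> w"
  shows "\<bar>x * w\<bar> = \<bar>x\<bar> * w"
proof -
  have "inf (pprt (- x)) (pprt x * w) = 0"
    using f_algebra_inf_mult_right_eq_0[OF inf_pprt_pprt_uminus assms]
    by (simp add: inf_commute)
  then have "inf (pprt x * w) (pprt (- x) * w) = 0"
    using f_algebra_inf_mult_right_eq_0[OF _ assms] by (simp add: inf_commute)
  moreover have "x * w = pprt x * w - pprt (- x) * w"
    by (metis pprt_diff_pprt_uminus left_diff_distrib)
  ultimately have "\<bar>x * w\<bar> = pprt x * w + pprt (- x) * w"
    by (simp add: abs_diff_of_inf_eq_0)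
  also have "\<dots> = \<bar>x\<bar> * w"
    by (simp add: distrib_right flip: pprt_add_pprt_uminus)
  finally show ?thesis .
qed

lemma f_algebra_abs_square:
  fixes x :: 'a
  shows "\<bar>x\<bar> * \<bar>x\<bar> = x * x" and "0 \<le> x * x"
proof -
  define P N where "P = pprt x" and "N = pprt (- x)"
  have "P * N = 0" "N * P = 0"
    using inf_pprt_pprt_uminus[of x] unfolding P_def N_def
    by (simp_all add: f_algebra_mult_eq_0_of_inf_eq_0 inf_commute)
  then have "(P - N) * (P - N) = P * P + N * N" "(P + N) * (P + N) = P * P + N * N"
    by (simp_all add: algebra_simps)
  then have "x * x = P * P + N * N" "\<bar>x\<bar> * \<bar>x\<bar> = P * P + N * N"
    unfolding P_def N_def by (simp_all add: pprt_diff_pprt_uminus pprt_add_pprt_uminus)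
  then show "\<bar>x\<bar> * \<bar>x\<bar> = x * x" and "0 \<le> x * x"
    unfolding P_def N_def by (simp_all add: f_algebra_mult_nonneg)
qed

text \<open>Positivity of \<open>(1 + x)\<^sup>-\<^sup>1\<close> in the unitization: the negative part of \<open>z\<close> lies below
  \<open>x z\<^sup>+\<close>, which is disjoint from it.\<close>

lemma f_algebra_nonneg_if_add_mult_nonneg:
  fixes x z :: 'a
  assumes "0 \<le> x" and "0 \<le> z + x * z"
  shows "0 \<le> z"
proof -
  have "- z \<le> x * z"
    using assms(2) diff_ge_0_iff_ge[of "x * z" "- z"] by (simp add: add.commute)
  then have "pprt (- z) \<le> x * pprt z"
    using pprt_mono f_algebra_pprt_mult_left[OF assms(1)] by metis
  moreover have "inf (x * pprt z) (pprt (- z)) = 0"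
    using f_algebra_inf_mult_left_eq_0[OF inf_pprt_pprt_uminus assms(1)] .
  ultimately have "pprt (- z) = 0"
    by (simp add: inf_absorb2)
  then show ?thesis
    using le_zero_iff_zero_pprt[of "- z"] by simp
qed

text \<open>The positive parts of \<open>t y - y\<close> and \<open>t (y - t y)\<close> are disjoint, so
  \<open>inf (t y - y) (t y - t\<^sup>2 y) \<le> 0\<close>.\<close>

lemma f_algebra_mult_le_add_mult_mult:
  fixes t y :: 'a
  assumes "0 \<le> t" and "0 \<le> y"
  shows "t * y \<le> y + t * (t * y)"
proof -
  define X where "X = t * y - y"
  have "t * y - t * (t * y) = t * (- X)"
    unfolding X_def by (simp add: algebra_simps)
  then have "pprt (t * y - t * (t * y)) = t * pprt (- X)"
    by (simp only: f_algebra_pprt_mult_left[OF assms(1)])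
  moreover have "inf (t * pprt (- X)) (pprt X) = 0"
    using f_algebra_inf_mult_left_eq_0[OF _ assms(1)] inf_pprt_pprt_uminus[of X]
    by (simp add: inf_commute)
  ultimately have "inf (pprt X) (pprt (t * y - t * (t * y))) = 0"
    by (simp add: inf_commute)
  moreover have "inf X (t * y - t * (t * y)) \<le> inf (pprt X) (pprt (t * y - t * (t * y)))"
    by (rule inf_mono) (simp_all add: pprt_def)
  moreover have "inf X (t * y - t * (t * y)) = t * y - sup y (t * (t * y))"
    unfolding X_def
    by (simp only: diff_conv_add_uminus add_inf_distrib_left neg_sup_eq_inf)
  ultimately have "t * y \<le> sup y (t * (t * y))"
    using diff_le_0_iff_le by fastforce
  also have "\<dots> \<le> y + t * (t * y)"
    using assms f_algebra_mult_nonneg by (simp add: add_increasing add_increasing2)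
  finally show ?thesis .
qed

text \<open>\<open>w + p w = a\<close> encodes \<open>w = (1 + p)\<^sup>-\<^sup>1 a\<close>.\<close>

lemma resolvent_mult_le:
  fixes p w a y :: 'a
  assumes "0 \<le> p" and "w + p * w = a" and "0 \<le> y" and "a * y \<le> a"
  shows "w * y \<le> w"
proof -
  define z where "z = w - w * y"
  have "z + p * z = a - a * y"
    unfolding z_def assms(2)[symmetric] by (simp add: algebra_simps)
  then have "0 \<le> z + p * z"
    using assms(4) by simp
  then have "0 \<le> z"
    using f_algebra_nonneg_if_add_mult_nonneg[OF assms(1)] by blast
  then show ?thesis
    unfolding z_def by simp
qed

lemma bounded_qi_closed_resolvent:
  fixes p :: 'a
  assumes "bounded_qi_closed TYPE('a)" and "0 \<le> p"
  obtains e where "e + p * e = p"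
proof -
  have "0 \<le> p * p"
    using assms(2) assms(2) by (rule f_algebra_mult_nonneg)
  then have "\<bar>(- p) * (- p) - (- p)\<bar> = p * p + p"
    using assms(2) by simp
  then have "\<bar>- p\<bar> \<le> \<bar>(- p) * (- p) - (- p)\<bar>"
    using \<open>0 \<le> p * p\<close> assms(2) by simp
  then obtain e where "- p + e = (- p) * e"
    using assms(1) unfolding bounded_qi_closed_def quasi_invertible_def by blast
  then have "e + p * e = p"
    by (simp add: algebra_simps)
  then show ?thesis ..
qed

lemma resolvent_bounded_elems:
  fixes a b w :: 'a
  assumes "0 \<le> a" and "a \<le> \<bar>b\<bar>" and "w + (b * b) * w = a"
  shows "w \<in> bounded_elems" and "b * w \<in> bounded_elems"
proof -
  define t p where "t = \<bar>b\<bar>" and "p = b * b"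
  have "0 \<le> t" "0 \<le> p" "t * t = p"
    unfolding t_def p_def by (simp_all add: f_algebra_abs_square)
  have wa: "w + p * w = a"
    using assms(3) unfolding p_def .
  then have "0 \<le> w"
    using \<open>0 \<le> p\<close> assms(1) by (metis f_algebra_nonneg_if_add_mult_nonneg)
  have ttw: "t * (t * w) = p * w"
    using \<open>t * t = p\<close> by (simp flip: mult.assoc)
  have "a * w \<le> t * w"
    using assms(2) \<open>0 \<le> w\<close> unfolding t_def by (rule f_algebra_mult_right_mono)
  also have "\<dots> \<le> w + t * (t * w)"
    using \<open>0 \<le> t\<close> \<open>0 \<le> w\<close> by (rule f_algebra_mult_le_add_mult_mult)
  also have "\<dots> = a"
    using ttw wa by simp
  finally have "w * w \<le> w"
    by (rule resolvent_mult_le[OF \<open>0 \<le> p\<close> wa \<open>0 \<le> w\<close>])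
  then show "w \<in> bounded_elems"
    using \<open>0 \<le> w\<close> f_algebra_abs_square(2)[of w] by (simp add: bounded_elemsI)
  have "0 \<le> t * w"
    using \<open>0 \<le> t\<close> \<open>0 \<le> w\<close> by (rule f_algebra_mult_nonneg)
  have "a * (t * w) \<le> t * (t * w)"
    using assms(2) \<open>0 \<le> t * w\<close> unfolding t_def by (rule f_algebra_mult_right_mono)
  also have "\<dots> \<le> w + p * w"
    using ttw \<open>0 \<le> w\<close> by simp
  finally have "w * (t * w) \<le> w"
    unfolding wa by (rule resolvent_mult_le[OF \<open>0 \<le> p\<close> wa \<open>0 \<le> t * w\<close>])
  have "\<bar>b * w\<bar> = t * w"
    unfolding t_def using \<open>0 \<le> w\<close> by (rule f_algebra_abs_mult_right)
  then have "\<bar>(b * w) * (b * w)\<bar> = t * (w * (t * w))"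
    using f_algebra_abs_square[of "b * w"] by (simp add: mult.assoc)
  also have "\<dots> \<le> t * w"
    using f_algebra_mult_left_mono[OF \<open>w * (t * w) \<le> w\<close> \<open>0 \<le> t\<close>] .
  finally show "b * w \<in> bounded_elems"
    using \<open>\<bar>b * w\<bar> = t * w\<close> by (simp add: bounded_elemsI)
qed

lemma intermediate_algebra_mem_if_nonneg_le_abs:
  fixes B :: "'a set"
  assumes "bounded_qi_closed TYPE('a)" and "intermediate_algebra B"
    and "b \<in> B" and "0 \<le> a" and "a \<le> \<bar>b\<bar>"
  shows "a \<in> B"
proof -
  obtain e where e: "e + (b * b) * e = b * b"
    using bounded_qi_closed_resolvent[OF assms(1)] f_algebra_abs_square(2) by blast
  define w where "w = a - e * a"
  have "w + (b * b) * w = a + (b * b) * a - (e + (b * b) * e) * a"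
    unfolding w_def by (simp add: algebra_simps)
  then have w: "w + (b * b) * w = a"
    unfolding e by simp
  then have "w \<in> B" "b * w \<in> B"
    using resolvent_bounded_elems[OF assms(4,5)] assms(2)
    unfolding intermediate_algebra_def by blast+
  then have "w + b * (b * w) \<in> B"
    using assms(2,3) unfolding intermediate_algebra_def subalgebra_def by blast
  then show ?thesis
    using w by (simp add: mult.assoc)
qed

end

theorem theorem8:
  fixes B :: "'a::{real_algebra, lattice_ab_group_add_abs, ordered_real_vector} set"
  assumes "f_algebra TYPE('a)"
    and "archimedean_vl TYPE('a)"
    and "semiprime TYPE('a)"
    and "bounded_qi_closed TYPE('a)"
    and "intermediate_algebra B"
  shows "order_ideal B"
proof -
  have sub: "subalgebra B"
    using assms(5) unfolding intermediate_algebra_def by blast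
  have "a \<in> B" if "b \<in> B" and "\<bar>a\<bar> \<le> \<bar>b\<bar>" for a b
  proof -
    have "pprt a \<le> \<bar>a\<bar>" "pprt (- a) \<le> \<bar>a\<bar>"
      unfolding pprt_add_pprt_uminus[symmetric] by simp_all
    then have "pprt a \<le> \<bar>b\<bar>" "pprt (- a) \<le> \<bar>b\<bar>"
      using that(2) by (blast intro: order_trans)+
    then have "pprt a \<in> B" "pprt (- a) \<in> B"
      using intermediate_algebra_mem_if_nonneg_le_abs[OF assms(1,4,5) that(1)] zero_le_pprt
      by blast+
    then show "a \<in> B"
      using subalgebra_diff[OF sub] pprt_diff_pprt_uminus by metis
  qed
  then show ?thesis
    using sub unfolding order_ideal_def subalgebra_def by blast
qed

end
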